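(* In the session calculus, weak fairness of actions (WA) coincides with J-fairness of actions (JA): a path is WA-fair iff it is JA-fair.
   Context: Session calculus: threads $P ::= \mathbf{end} \mid \bigoplus_{i\in I} p_i!\lambda_i;P_i \mid \sum_{i\in I} p_i?\lambda_i;P_i \mid X \mid \mu X.P$ (guarded recursion), thread states additionally $\langle q!\lambda\rangle;P$; networks $p[\![P]\!]\mid 0\mid N\parallel N$ with distinct locations and closed threads, modulo associativity/commutativity/unit. Transitions: (choice) $p[\![\bigoplus_{i\in I}p_i!\lambda_i;P_i]\!]\parallel N \xrightarrow{\tau} p[\![\langle p_k!\lambda_k\rangle;P_k]\!]\parallel N$; (unfold) $p[\![\mu X.P]\!]\parallel N\xrightarrow{\tau} p[\![P\{\mu X.P/X\}]\!]\parallel N$; (comm) $p_k[\![\langle q!\lambda_k\rangle;Q]\!]\parallel q[\![\sum_{i\in I}p_i?\lambda_i;P_i]\!]\parallel N \xrightarrow{(p_k,\lambda_k,q)} p_k[\![Q]\!]\parallel q[\![P_k]\!]\parallel N$. $\mathrm{comp}(t)$ is the moving location for a $\tau$-transition and $\{p,q\}$ for label $(p,\lambda,q)$; $t,u$ are concurrent if $\mathrm{comp}(t)\cap\mathrm{comp}(u)=\emptyset$. A path is a network state with a maximal sequence of transitions. Actions as tasks: a label $\alpha$ is enabled in $N$ if some transition labelled $\alpha$ leaves $N$; a path engages in $\alpha$ if it contains a transition labelled $\alpha$. $\alpha$ is perpetually enabled on a path if enabled in all its states. WA: $\pi$ is WA-fair if for every suffix $\pi'$, every action perpetually enabled on $\pi'$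 is engaged in by $\pi'$. JA: $\alpha$ is enabled during a transition $u$ from $N$ to $N'$ if there is a transition $t$ from $N$ labelled $\alpha$ that is concurrent with $u$; $\alpha$ is continuously enabled on a path if enabled in all its states and during all its transitions; $\pi$ is JA-fair if for every suffix $\pi'$, every action continuously enabled on $\pi'$ is engaged in by $\pi'$. *)

theory Defs
  imports Main "HOL-Library.Extended_Nat"
begin

text \<open>Internal choice
  \<open>\<Oplus>\<^sub>i\<^sub>\<in>\<^sub>I p_i!\<lambda>_i;P_i\<close> and external choice \<open>\<Sum>\<^sub>i\<^sub>\<in>\<^sub>I p_i?\<lambda>_i;P_i\<close> are
  given by finite lists of branches (location, label, continuation).\<close>

datatype ('loc, 'lab) thread =
    End
  | Send "('loc \<times> 'lab \<times> ('loc, 'lab) thread) list"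
  | Recv "('loc \<times> 'lab \<times> ('loc, 'lab) thread) list"
  | Var nat
  | Mu nat "('loc, 'lab) thread"

text \<open>Thread states: a thread, or a committed output \<open>\<langle>q!\<lambda>\<rangle>;P\<close>.\<close>
datatype ('loc, 'lab) tstate =
    Thr "('loc, 'lab) thread"
  | Pend 'loc 'lab "('loc, 'lab) thread"

text \<open>Networks: finitely many located thread states with distinct locations;
  a partial map from locations (this quotients by assoc./comm./unit).\<close>
type_synonym ('loc, 'lab) net = "'loc \<Rightarrow> ('loc, 'lab) tstate option"

fun subst :: "nat \<Rightarrow> ('loc, 'lab) thread \<Rightarrow> ('loc, 'lab) thread \<Rightarrow> ('loc, 'lab) thread" where
  "subst X Q End = End"
| "subst X Q (Send bs) = Send (map (\<lambda>(p, l, P). (p, l, subst X Q P)) bs)"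
| "subst X Q (Recv bs) = Recv (map (\<lambda>(p, l, P). (p, l, subst X Q P)) bs)"
| "subst X Q (Var Y) = (if X = Y then Q else Var Y)"
| "subst X Q (Mu Y P) = (if X = Y then Mu Y P else Mu Y (subst X Q P))"

fun fv :: "('loc, 'lab) thread \<Rightarrow> nat set" where
  "fv End = {}"
| "fv (Send bs) = (\<Union>(p, l, P) \<in> set bs. fv P)"
| "fv (Recv bs) = (\<Union>(p, l, P) \<in> set bs. fv P)"
| "fv (Var X) = {X}"
| "fv (Mu X P) = fv P - {X}"

text \<open>Variables occurring unguarded (not under a prefix).\<close>
fun ufv :: "('loc, 'lab) thread \<Rightarrow> nat set" where
  "ufv End = {}"
| "ufv (Send bs) = {}"
| "ufv (Recv bs) = {}"
| "ufv (Var X) = {X}"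
| "ufv (Mu X P) = ufv P - {X}"

fun wf_thread :: "('loc, 'lab) thread \<Rightarrow> bool" where
  "wf_thread End = True"
| "wf_thread (Send bs) = (bs \<noteq> [] \<and> (\<forall>(p, l, P) \<in> set bs. wf_thread P))"
| "wf_thread (Recv bs) = (bs \<noteq> [] \<and> (\<forall>(p, l, P) \<in> set bs. wf_thread P))"
| "wf_thread (Var X) = True"
| "wf_thread (Mu X P) = (X \<notin> ufv P \<and> wf_thread P)"

definition closed_wf :: "('loc, 'lab) thread \<Rightarrow> bool" where
  "closed_wf P \<longleftrightarrow> fv P = {} \<and> wf_thread P"

fun wf_tstate :: "('loc, 'lab) tstate \<Rightarrow> bool" where
  "wf_tstate (Thr P) = closed_wf P"
| "wf_tstate (Pend q l P) = closed_wf P"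

definition wf_net :: "('loc, 'lab) net \<Rightarrow> bool" where
  "wf_net N \<longleftrightarrow> finite (dom N) \<and> (\<forall>p t. N p = Some t \<longrightarrow> wf_tstate t)"

datatype ('loc, 'lab) action = Tau | Act 'loc 'lab 'loc

text \<open>\<open>step N \<alpha> C N'\<close>: a transition from \<open>N\<close> to \<open>N'\<close> with label \<open>\<alpha>\<close> and
  set of components \<open>C = comp(t)\<close>.\<close>
inductive step :: "('loc, 'lab) net \<Rightarrow> ('loc, 'lab) action \<Rightarrow> 'loc set \<Rightarrow> ('loc, 'lab) net \<Rightarrow> bool" where
  choice: "N p = Some (Thr (Send bs)) \<Longrightarrow> (q, l, P) \<in> set bs \<Longrightarrow>
     step N Tau {p} (N(p \<mapsto> Pend q l P))"
| unfold: "N p = Some (Thr (Mu X P)) \<Longrightarrow>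
     step N Tau {p} (N(p \<mapsto> Thr (subst X (Mu X P) P)))"
| comm: "N p = Some (Pend q l Q) \<Longrightarrow> N q = Some (Thr (Recv bs)) \<Longrightarrow> (p, l, P) \<in> set bs \<Longrightarrow>
     step N (Act p l q) {p, q} (N(p \<mapsto> Thr Q, q \<mapsto> Thr P))"

definition enabled :: "('loc, 'lab) net \<Rightarrow> ('loc, 'lab) action \<Rightarrow> bool" where
  "enabled N \<alpha> \<longleftrightarrow> (\<exists>C N'. step N \<alpha> C N')"

definition enabled_during :: "('loc, 'lab) net \<Rightarrow> 'loc set \<Rightarrow> ('loc, 'lab) action \<Rightarrow> bool" where
  "enabled_during N C \<alpha> \<longleftrightarrow> (\<exists>C' N'. step N \<alpha> C' N' \<and> C' \<inter> C = {})"

text \<open>A path from \<open>N\<close>: states \<open>s 0 = N, s 1, \<dots>\<close>, transitions \<open>tr i\<close>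
  (label and components) from \<open>s i\<close> to \<open>s (i+1)\<close> for \<open>i < len\<close>;
  maximality: if \<open>len\<close> is finite, the last state has no outgoing transition.\<close>
definition is_path :: "('loc, 'lab) net \<Rightarrow> (nat \<Rightarrow> ('loc, 'lab) net)
    \<Rightarrow> (nat \<Rightarrow> ('loc, 'lab) action \<times> 'loc set) \<Rightarrow> enat \<Rightarrow> bool" where
  "is_path N s tr len \<longleftrightarrow> s 0 = N
     \<and> (\<forall>i. enat i < len \<longrightarrow> step (s i) (fst (tr i)) (snd (tr i)) (s (Suc i)))
     \<and> (\<forall>n. len = enat n \<longrightarrow> \<not> (\<exists>\<alpha> C N'. step (s n) \<alpha> C N'))"

text \<open>Fairness; the suffix starting at position \<open>k\<close> has states \<open>s j\<close>
  (\<open>k \<le> j \<le> len\<close>) and transitions \<open>tr j\<close> (\<open>k \<le> j < len\<close>).\<close>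
definition WA_fair :: "(nat \<Rightarrow> ('loc, 'lab) net) \<Rightarrow> (nat \<Rightarrow> ('loc, 'lab) action \<times> 'loc set) \<Rightarrow> enat \<Rightarrow> bool" where
  "WA_fair s tr len \<longleftrightarrow> (\<forall>k. enat k \<le> len \<longrightarrow> (\<forall>\<alpha>.
     (\<forall>j. k \<le> j \<and> enat j \<le> len \<longrightarrow> enabled (s j) \<alpha>)
     \<longrightarrow> (\<exists>j. k \<le> j \<and> enat j < len \<and> fst (tr j) = \<alpha>)))"

definition JA_fair :: "(nat \<Rightarrow> ('loc, 'lab) net) \<Rightarrow> (nat \<Rightarrow> ('loc, 'lab) action \<times> 'loc set) \<Rightarrow> enat \<Rightarrow> bool" where
  "JA_fair s tr len \<longleftrightarrow> (\<forall>k. enat k \<le> len \<longrightarrow> (\<forall>\<alpha>.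
     ((\<forall>j. k \<le> j \<and> enat j \<le> len \<longrightarrow> enabled (s j) \<alpha>)
      \<and> (\<forall>j. k \<le> j \<and> enat j < len \<longrightarrow> enabled_during (s j) (snd (tr j)) \<alpha>))
     \<longrightarrow> (\<exists>j. k \<le> j \<and> enat j < len \<and> fst (tr j) = \<alpha>)))"

end

theory Submission
  imports Defs
begin

text \<open>WA-fairness trivially implies JA-fairness. Conversely, suppose an action \<open>\<alpha>\<close> is
  enabled in every state of a suffix but never taken. A \<open>\<tau>\<close> can only be disabled during a
  communication, which never involves the location that performs the \<open>\<tau>\<close>. A communication
  \<open>(p, \<lambda>, q)\<close> stays enabled during every other transition unless that transition lets the
  receiver \<open>q\<close> take a different input, which replaces the thread at \<open>q\<close> by a strictly
  smaller one. This size can drop only finitely often, so on some further suffix \<open>\<alpha>\<close> is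
  continuously enabled, and JA-fairness forces it to be taken.\<close>

definition action_measure :: "('loc, 'lab) action \<Rightarrow> ('loc, 'lab) net \<Rightarrow> nat" where
  "action_measure \<alpha> N = (case \<alpha> of
      Tau \<Rightarrow> 0
    | Act p l q \<Rightarrow> (case N q of Some (Thr P) \<Rightarrow> size P | _ \<Rightarrow> 0))"

lemma WA_fair_imp_JA_fair: "WA_fair s tr len \<Longrightarrow> JA_fair s tr len"
  unfolding WA_fair_def JA_fair_def by blast

lemma size_less_Recv: "(p, l, P) \<in> set bs \<Longrightarrow> size P < size (Recv bs)"
  by (induction bs) auto

lemma step_Tau_cases:
  assumes "step N Tau C N'"
  obtains r where "C = {r}"
    "(\<exists>bs. N r = Some (Thr (Send bs))) \<or> (\<exists>X P. N r = Some (Thr (Mu X P)))"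
  using assms by (cases rule: step.cases) auto

lemma step_Act_cases:
  assumes "step N (Act p l q) C N'"
  obtains Q bs P where "C = {p, q}" "N p = Some (Pend q l Q)" "N q = Some (Thr (Recv bs))"
    "(p, l, P) \<in> set bs"
  using assms by (cases rule: step.cases) auto

lemma step_Tau_enabled_during:
  assumes "step N u C N'" "u \<noteq> Tau" "enabled N Tau"
  shows "enabled_during N C Tau"
proof -
  from assms(1,2) obtain p l q Q bs where
    C: "C = {p, q}" and "N p = Some (Pend q l Q)" "N q = Some (Thr (Recv bs))"
    by (cases rule: step.cases) auto
  moreover from assms(3) obtain C' N'' where tau: "step N Tau C' N''"
    unfolding enabled_def by blast
  ultimately have "C' \<inter> C = {}"
    by (elim step_Tau_cases) auto
  with tau show ?thesis
    unfolding enabled_during_def by blast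
qed

lemma step_Act_enabled_during_or_measure_less:
  assumes "step N u C N'" "u \<noteq> Act p l q" "enabled N (Act p l q)"
  shows "enabled_during N C (Act p l q) \<and> N' q = N q
    \<or> action_measure (Act p l q) N' < action_measure (Act p l q) N"
proof -
  from assms(3) obtain Q bs P where
    p: "N p = Some (Pend q l Q)" and q: "N q = Some (Thr (Recv bs))" and P: "(p, l, P) \<in> set bs"
    unfolding enabled_def by (blast elim: step_Act_cases)
  have during: "enabled_during N C (Act p l q)" if "C \<inter> {p, q} = {}"
    using step.comm[OF p q P] that unfolding enabled_during_def by blast
  from assms(1) show ?thesis
  proof (cases rule: step.cases)
    case (choice r)
    with p q have "C \<inter> {p, q} = {}" "N' q = N q"
      by auto
    with during show ?thesis by blast
  next
    case (unfold r)
    with p q have "C \<inter> {p, q} = {}" "N' q = N q"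
      by auto
    with during show ?thesis by blast
  next
    case (comm p' q' l' Q' bs' P')
    show ?thesis
    proof (cases "q' = q")
      case True
      with comm q have "N' q = Some (Thr P')" "size P' < size (Recv bs)"
        using size_less_Recv by auto
      with q show ?thesis
        unfolding action_measure_def by simp
    next
      case False
      \<comment> \<open>a communication from \<open>p\<close> must go to \<open>q\<close> with label \<open>l\<close>, i.e. be \<open>(p, l, q)\<close> itself\<close>
      with comm p q assms(2) have "C \<inter> {p, q} = {}" "N' q = N q"
        by auto
      with during show ?thesis by blast
    qed
  qed
qed

lemma step_enabled_during_or_measure_less:
  assumes "step N u C N'" "u \<noteq> \<alpha>" "enabled N \<alpha>"
  shows "action_measure \<alpha> N' \<le> action_measure \<alpha> N
    \<and> (action_measure \<alpha> N' = action_measure \<alpha> N \<longrightarrow> enabled_during N C \<alpha>)"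
proof (cases \<alpha>)
  case Tau
  with step_Tau_enabled_during assms show ?thesis
    unfolding action_measure_def by simp
next
  case (Act p l q)
  with step_Act_enabled_during_or_measure_less[OF assms(1)] assms(2,3) show ?thesis
    unfolding action_measure_def by fastforce
qed

lemma descent_antimono:
  fixes len :: enat
  assumes "\<And>j. k \<le> j \<Longrightarrow> enat j < len \<Longrightarrow> f (Suc j) \<le> (f j :: nat)"
    and "k \<le> j" "enat j \<le> len"
  shows "f j \<le> f k"
  using assms(2,3)
proof (induction j rule: dec_induct)
  case (step j)
  then have "enat j < len"
    by (simp add: Suc_ile_eq)
  with step assms(1) show ?case
    by (meson order.strict_implies_order order_trans)
qed simp

lemma descent_eventually_stable:
  fixes f :: "nat \<Rightarrow> nat" and len :: enat
  assumes "enat k \<le> len"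
    and "\<And>j. k \<le> j \<Longrightarrow> enat j < len \<Longrightarrow> f (Suc j) \<le> f j \<and> (f (Suc j) = f j \<longrightarrow> P j)"
  obtains k' where "k \<le> k'" "enat k' \<le> len" "\<forall>j. k' \<le> j \<and> enat j < len \<longrightarrow> P j"
proof -
  from assms have "\<exists>k'\<ge>k. enat k' \<le> len \<and> (\<forall>j. k' \<le> j \<and> enat j < len \<longrightarrow> P j)"
  proof (induction "f k" arbitrary: k rule: less_induct)
    case less
    show ?case
    proof (cases "\<forall>j. k \<le> j \<and> enat j < len \<longrightarrow> P j")
      case False
      then obtain j where j: "k \<le> j" "enat j < len" "\<not> P j"
        by blast
      have "f j \<le> f k"
        using descent_antimono[of k len f j] less.prems(2) j by (auto intro: order.strict_implies_order)
      with less.prems(2) j have "f (Suc j) < f k"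
        by fastforce
      moreover have "enat (Suc j) \<le> len"
        using j by (simp add: Suc_ile_eq)
      ultimately have "\<exists>k'\<ge>Suc j. enat k' \<le> len \<and> (\<forall>i. k' \<le> i \<and> enat i < len \<longrightarrow> P i)"
        using less.hyps less.prems(2) j(1) by simp
      with j(1) show ?thesis
        by (meson Suc_leD order_trans)
    qed (use less.prems in blast)
  qed
  with that show thesis
    by blast
qed

theorem mainTheorem16:
  fixes N :: "('loc, 'lab) net"
    and s :: "nat \<Rightarrow> ('loc, 'lab) net"
    and tr :: "nat \<Rightarrow> ('loc, 'lab) action \<times> 'loc set"
    and len :: enat
  assumes "wf_net N"
    and "is_path N s tr len"
  shows "WA_fair s tr len \<longleftrightarrow> JA_fair s tr len"
proof
  assume JA: "JA_fair s tr len"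
  show "WA_fair s tr len"
    unfolding WA_fair_def
  proof (intro allI impI; rule ccontr)
    fix k \<alpha>
    assume k: "enat k \<le> len" and enabled: "\<forall>j. k \<le> j \<and> enat j \<le> len \<longrightarrow> enabled (s j) \<alpha>"
      and not_taken: "\<nexists>j. k \<le> j \<and> enat j < len \<and> fst (tr j) = \<alpha>"
    have "action_measure \<alpha> (s (Suc j)) \<le> action_measure \<alpha> (s j)
        \<and> (action_measure \<alpha> (s (Suc j)) = action_measure \<alpha> (s j)
           \<longrightarrow> enabled_during (s j) (snd (tr j)) \<alpha>)"
      if "k \<le> j" "enat j < len" for j
    proof (rule step_enabled_during_or_measure_less)
      show "step (s j) (fst (tr j)) (snd (tr j)) (s (Suc j))"
        using assms(2) that(2) unfolding is_path_def by blast
      show "fst (tr j) \<noteq> \<alpha>"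
        using not_taken that by blast
      show "enabled (s j) \<alpha>"
        using enabled that by (simp add: order.strict_implies_order)
    qed
    then obtain k' where k': "k \<le> k'" "enat k' \<le> len"
      and during: "\<forall>j. k' \<le> j \<and> enat j < len \<longrightarrow> enabled_during (s j) (snd (tr j)) \<alpha>"
      by (rule descent_eventually_stable[OF k, of "\<lambda>j. action_measure \<alpha> (s j)"]) auto
    from enabled k'(1) have "\<forall>j. k' \<le> j \<and> enat j \<le> len \<longrightarrow> enabled (s j) \<alpha>"
      by auto
    with JA k'(2) during obtain j where "k' \<le> j" "enat j < len" "fst (tr j) = \<alpha>"
      unfolding JA_fair_def by blast
    with not_taken k'(1) show False
      by auto
  qed
qed (rule WA_fair_imp_JA_fair)

end
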